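(* Let $R$ be a commutative ring. An $n\times n$ matrix $X$ over $R$ satisfies $XA=AX^T$ for every $n\times n$ reverse circulant matrix $A$ over $R$ if and only if $X$ is a circulant matrix.
   Context: An $n\times n$ matrix $(a_{ij})$ is circulant if $a_{ij}$ depends only on $(j-i)\bmod n$, and reverse circulant if $a_{ij}$ depends only on $(i+j)\bmod n$. *)

theory Defs
  imports Main
begin

text \<open>n x n matrices over a commutative ring are represented as functions
  nat \<Rightarrow> nat \<Rightarrow> 'a, only the entries with indices in {0..<n} being relevant.\<close>

definition circulant :: "nat \<Rightarrow> (nat \<Rightarrow> nat \<Rightarrow> 'a) \<Rightarrow> bool" where
  "circulant n A \<longleftrightarrow>
     (\<forall>i<n. \<forall>j<n. \<forall>k<n. \<forall>l<n.
        (int j - int i) mod int n = (int l - int k) mod int n \<longrightarrow> A i j = A k l)"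

definition reverse_circulant :: "nat \<Rightarrow> (nat \<Rightarrow> nat \<Rightarrow> 'a) \<Rightarrow> bool" where
  "reverse_circulant n A \<longleftrightarrow>
     (\<forall>i<n. \<forall>j<n. \<forall>k<n. \<forall>l<n.
        (i + j) mod n = (k + l) mod n \<longrightarrow> A i j = A k l)"

definition mat_mult :: "nat \<Rightarrow> (nat \<Rightarrow> nat \<Rightarrow> 'a::comm_ring_1) \<Rightarrow> (nat \<Rightarrow> nat \<Rightarrow> 'a) \<Rightarrow> nat \<Rightarrow> nat \<Rightarrow> 'a" where
  "mat_mult n A B = (\<lambda>i j. \<Sum>k<n. A i k * B k j)"

definition mat_transpose :: "(nat \<Rightarrow> nat \<Rightarrow> 'a) \<Rightarrow> nat \<Rightarrow> nat \<Rightarrow> 'a" where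
  "mat_transpose A = (\<lambda>i j. A j i)"

end

theory Submission
  imports Defs
begin

(* With indices read mod n, a circulant X has X i j = c (j - i) and a reverse circulant A has
   A i j = a (i + j), so (X A) i j = \<Sum>k. c (k - i) a (k + j) and
   (A X^T) i j = \<Sum>k. a (i + k) c (k - j); the rotation k \<mapsto> k + j - i of Z/n turns the
   second sum into the first. Conversely, testing the identity against the 0/1 reverse circulant
   with ones exactly where i + j = m (mod n) and reading off column 0 gives X i m = X 0 (m - i),
   so X is circulant. *)

lemma int_mod_add_diff:
  assumes "i \<le> n"
  shows "int ((j + (n - i)) mod n) = (int j - int i) mod int n"
proof -
  have "int ((j + (n - i)) mod n) = ((int j - int i) + int n) mod int n"
    using assms by (simp add: zmod_int of_nat_diff algebra_simps)
  then show ?thesis by simp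
qed

lemma add_mod_eq_iff:
  fixes j k m n :: nat
  assumes "k < n" "j < n" "m < n"
  shows "(k + j) mod n = m \<longleftrightarrow> k = (m + (n - j)) mod n"
proof
  assume "(k + j) mod n = m"
  have "k = (k + j + (n - j)) mod n" using assms by simp
  also have "\<dots> = ((k + j) mod n + (n - j)) mod n" by (simp add: mod_add_left_eq)
  finally show "k = (m + (n - j)) mod n" using \<open>(k + j) mod n = m\<close> by simp
next
  assume "k = (m + (n - j)) mod n"
  then have "(k + j) mod n = (m + (n - j) + j) mod n" by (simp add: mod_add_left_eq)
  also have "\<dots> = m" using assms by simp
  finally show "(k + j) mod n = m" .
qed

lemma sum_lessThan_rotate:
  fixes n s :: nat
  shows "(\<Sum>k<n. f ((k + s) mod n)) = (\<Sum>k<n. f k)"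
proof -
  let ?rot = "\<lambda>k. (k + s) mod n"
  have inj: "inj_on ?rot {..<n}"
  proof (rule inj_onI)
    fix a b assume "a \<in> {..<n}" "b \<in> {..<n}" and eq: "?rot a = ?rot b"
    then have "a < n" "b < n" by auto
    moreover have "s mod n < n" using \<open>a < n\<close> by simp
    moreover have "(a + s mod n) mod n = ?rot a" "(b + s mod n) mod n = ?rot a"
      using eq by (simp_all add: mod_add_right_eq)
    moreover have "?rot a < n" using \<open>a < n\<close> by simp
    ultimately show "a = b" by (metis add_mod_eq_iff)
  qed
  have "?rot ` {..<n} = {..<n}"
  proof (cases "n = 0")
    case False
    then show ?thesis by (intro endo_inj_surj inj) auto
  qed simp
  then show ?thesis
    using sum.reindex[OF inj, of f] by (simp add: comp_def)
qed

lemma circulant_iff_first_row: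
  "circulant n X \<longleftrightarrow> (\<forall>i<n. \<forall>j<n. X i j = X 0 ((j + (n - i)) mod n))"
proof (intro iffI allI impI)
  fix i j assume X: "circulant n X" and "i < n" "j < n"
  let ?l = "(j + (n - i)) mod n"
  have "int ?l = (int j - int i) mod int n"
    using \<open>i < n\<close> by (intro int_mod_add_diff) simp
  then have "?l < n" "(int j - int i) mod int n = (int ?l - int 0) mod int n"
    using \<open>i < n\<close> by simp_all
  with X \<open>i < n\<close> \<open>j < n\<close> show "X i j = X 0 ?l"
    unfolding circulant_def by blast
next
  assume first_row: "\<forall>i<n. \<forall>j<n. X i j = X 0 ((j + (n - i)) mod n)"
  show "circulant n X"
    unfolding circulant_def
  proof (intro allI impI)
    fix i j k l assume "i < n" "j < n" "k < n" "l < n"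
      and "(int j - int i) mod int n = (int l - int k) mod int n"
    have "int ((j + (n - i)) mod n) = (int j - int i) mod int n"
      using \<open>i < n\<close> by (intro int_mod_add_diff) simp
    also have "\<dots> = (int l - int k) mod int n" by fact
    also have "\<dots> = int ((l + (n - k)) mod n)"
      using \<open>k < n\<close> by (intro int_mod_add_diff[symmetric]) simp
    finally have "(j + (n - i)) mod n = (l + (n - k)) mod n" by (simp only: of_nat_eq_iff)
    with first_row \<open>i < n\<close> \<open>j < n\<close> \<open>k < n\<close> \<open>l < n\<close> show "X i j = X k l" by metis
  qed
qed

lemma reverse_circulant_iff_first_row:
  "reverse_circulant n A \<longleftrightarrow> (\<forall>i<n. \<forall>j<n. A i j = A 0 ((i + j) mod n))"
proof (intro iffI allI impI)
  fix i j assume "reverse_circulant n A" "i < n" "j < n"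
  moreover have "0 < n" "(i + j) mod n < n" "(i + j) mod n = (0 + (i + j) mod n) mod n"
    using \<open>i < n\<close> by simp_all
  ultimately show "A i j = A 0 ((i + j) mod n)"
    unfolding reverse_circulant_def by blast
next
  assume "\<forall>i<n. \<forall>j<n. A i j = A 0 ((i + j) mod n)"
  then show "reverse_circulant n A"
    unfolding reverse_circulant_def by metis
qed

definition reverse_circulant_basis :: "nat \<Rightarrow> nat \<Rightarrow> nat \<Rightarrow> nat \<Rightarrow> 'a::zero_neq_one" where
  "reverse_circulant_basis n m = (\<lambda>i j. if (i + j) mod n = m then 1 else 0)"

lemma reverse_circulant_basis_is_reverse_circulant:
  "reverse_circulant n (reverse_circulant_basis n m)"
  by (simp add: reverse_circulant_def reverse_circulant_basis_def)

lemma mat_mult_reverse_circulant_basis: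
  assumes "j < n" "m < n"
  shows "mat_mult n X (reverse_circulant_basis n m) i j = X i ((m + (n - j)) mod n)"
proof -
  have "mat_mult n X (reverse_circulant_basis n m) i j
      = (\<Sum>k<n. if k = (m + (n - j)) mod n then X i k else 0)"
    unfolding mat_mult_def reverse_circulant_basis_def using assms
    by (intro sum.cong) (auto simp: add_mod_eq_iff)
  then show ?thesis using assms by simp
qed

lemma mat_mult_reverse_circulant_basis_transpose:
  assumes "i < n" "m < n"
  shows "mat_mult n (reverse_circulant_basis n m) (mat_transpose X) i j
    = X j ((m + (n - i)) mod n)"
proof -
  have "mat_mult n (reverse_circulant_basis n m) (mat_transpose X) i j
      = (\<Sum>k<n. if k = (m + (n - i)) mod n then X j k else 0)"
    unfolding mat_mult_def mat_transpose_def reverse_circulant_basis_def using assms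
    by (intro sum.cong) (auto simp: add_mod_eq_iff add.commute[of i])
  then show ?thesis using assms by simp
qed

lemma sum_diff_add_mod_rotate:
  fixes a c :: "nat \<Rightarrow> 'a::comm_semiring_0"
  assumes "i < n" "j < n"
  shows "(\<Sum>k<n. c ((k + (n - i)) mod n) * a ((k + j) mod n))
       = (\<Sum>k<n. a ((i + k) mod n) * c ((k + (n - j)) mod n))"
    (is "_ = (\<Sum>k<n. ?f k)")
proof -
  have "(\<Sum>k<n. c ((k + (n - i)) mod n) * a ((k + j) mod n))
      = (\<Sum>k<n. ?f ((k + (j + (n - i))) mod n))"
  proof (rule sum.cong)
    fix k
    have "(i + (k + (j + (n - i))) mod n) mod n = (i + (k + (j + (n - i)))) mod n"
      by (rule mod_add_right_eq)
    also have "i + (k + (j + (n - i))) = k + j + n"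
      using \<open>i < n\<close> by simp
    finally have a_arg: "(i + (k + (j + (n - i))) mod n) mod n = (k + j) mod n"
      by simp
    have "((k + (j + (n - i))) mod n + (n - j)) mod n = (k + (j + (n - i)) + (n - j)) mod n"
      by (rule mod_add_left_eq)
    also have "k + (j + (n - i)) + (n - j) = k + (n - i) + n"
      using \<open>j < n\<close> by simp
    finally have c_arg: "((k + (j + (n - i))) mod n + (n - j)) mod n = (k + (n - i)) mod n"
      by simp
    show "c ((k + (n - i)) mod n) * a ((k + j) mod n) = ?f ((k + (j + (n - i))) mod n)"
      by (simp only: a_arg c_arg mult.commute)
  qed simp
  also have "\<dots> = (\<Sum>k<n. ?f k)"
    by (rule sum_lessThan_rotate)
  finally show ?thesis .
qed

lemma mat_mult_circulant_reverse_circulant: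
  fixes X A :: "nat \<Rightarrow> nat \<Rightarrow> 'a::comm_ring_1"
  assumes X: "circulant n X" and A: "reverse_circulant n A" and "i < n" "j < n"
  shows "mat_mult n X A i j = mat_mult n A (mat_transpose X) i j"
proof -
  define c where "c = X 0"
  define a where "a = A 0"
  have Xc: "X p q = c ((q + (n - p)) mod n)" if "p < n" "q < n" for p q
    using X that unfolding c_def circulant_iff_first_row by blast
  have Aa: "A p q = a ((p + q) mod n)" if "p < n" "q < n" for p q
    using A that unfolding a_def reverse_circulant_iff_first_row by blast
  have "mat_mult n X A i j = (\<Sum>k<n. c ((k + (n - i)) mod n) * a ((k + j) mod n))"
    unfolding mat_mult_def using \<open>i < n\<close> \<open>j < n\<close> by (intro sum.cong) (simp_all add: Xc Aa)
  also have "\<dots> = (\<Sum>k<n. a ((i + k) mod n) * c ((k + (n - j)) mod n))"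
    using \<open>i < n\<close> \<open>j < n\<close> by (rule sum_diff_add_mod_rotate)
  also have "\<dots> = mat_mult n A (mat_transpose X) i j"
    unfolding mat_mult_def mat_transpose_def using \<open>i < n\<close> \<open>j < n\<close>
    by (intro sum.cong) (simp_all add: Xc Aa)
  finally show ?thesis .
qed

theorem mainTheorem5:
  fixes n :: nat and X :: "nat \<Rightarrow> nat \<Rightarrow> 'a::comm_ring_1"
  shows "(\<forall>A :: nat \<Rightarrow> nat \<Rightarrow> 'a. reverse_circulant n A \<longrightarrow>
            (\<forall>i<n. \<forall>j<n. mat_mult n X A i j = mat_mult n A (mat_transpose X) i j))
         \<longleftrightarrow> circulant n X"
proof
  assume commutes: "\<forall>A :: nat \<Rightarrow> nat \<Rightarrow> 'a. reverse_circulant n A \<longrightarrow>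
            (\<forall>i<n. \<forall>j<n. mat_mult n X A i j = mat_mult n A (mat_transpose X) i j)"
  have "X i m = X 0 ((m + (n - i)) mod n)" if "i < n" "m < n" for i m
  proof -
    let ?E = "reverse_circulant_basis n m"
    have "mat_mult n X ?E i 0 = mat_mult n ?E (mat_transpose X) i 0"
      using commutes reverse_circulant_basis_is_reverse_circulant that by fastforce
    then show ?thesis
      using that
      by (simp add: mat_mult_reverse_circulant_basis mat_mult_reverse_circulant_basis_transpose)
  qed
  then show "circulant n X"
    unfolding circulant_iff_first_row by blast
qed (use mat_mult_circulant_reverse_circulant in blast)

end
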